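(* Consider equation (E) and assume each $\tau_i$ is non-decreasing. Let $p:[t_0,\infty)\to[0,\infty)$ be continuous with $p_i(t)\ge p(t)$ for all $t\ge t_0$ and $i=1,\dots,m$. If $$\limsup_{t\to+\infty}\prod_{j=1}^{m}\int_{\tau_j(t)}^{t}p(s)\,ds>\frac{1}{m^{m}},$$ then all solutions of (E) oscillate.
   Context: Equation (E) is $x'(t)+\sum_{i=1}^{m}p_i(t)\,x(\tau_i(t))=0$, $t\ge t_0$, where $m\ge1$ is an integer and, for each $i$, $p_i,\tau_i:[t_0,\infty)\to[0,\infty)$ are continuous, $\tau_i(t)\le t$ for $t\ge t_0$, and $\lim_{t\to\infty}\tau_i(t)=\infty$. Let $\tau(t)=\min_i\tau_i(t)$ and $\tau_{(-1)}(t)=\sup\{s:\tau(s)\le t\}$. A solution of (E) is a function $x\in C([T_0,\infty);\mathbb{R})$ for some $T_0\ge t_0$ which is continuously differentiable on $[\tau_{(-1)}(T_0),\infty)$ and satisfies (E) for $t\ge\tau_{(-1)}(T_0)$. A solution is oscillatory if it has arbitrarily large zeros; "all solutions oscillate" means every solution is oscillatory. *)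

theory Defs
  imports "HOL-Analysis.Analysis"
begin

text \<open>Equation (E): x'(t) + sum_{i=1..m} p_i(t) x(tau_i(t)) = 0, t >= t0.
  The coefficient functions and delays are indexed by i in {1..m}.\<close>

definition tau_min :: "nat \<Rightarrow> (nat \<Rightarrow> real \<Rightarrow> real) \<Rightarrow> real \<Rightarrow> real" where
  "tau_min m tau t = Min ((\<lambda>i. tau i t) ` {1..m})"

definition tau_inv :: "real \<Rightarrow> nat \<Rightarrow> (nat \<Rightarrow> real \<Rightarrow> real) \<Rightarrow> real \<Rightarrow> real" where
  "tau_inv t0 m tau T = Sup {s. t0 \<le> s \<and> tau_min m tau s \<le> T}"

definition is_solution ::
  "real \<Rightarrow> nat \<Rightarrow> (nat \<Rightarrow> real \<Rightarrow> real) \<Rightarrow> (nat \<Rightarrow> real \<Rightarrow> real) \<Rightarrow> (real \<Rightarrow> real) \<Rightarrow> real \<Rightarrow> bool" where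
  "is_solution t0 m p tau x T0 \<longleftrightarrow>
     T0 \<ge> t0 \<and> continuous_on {T0..} x \<and>
     (\<exists>x'. continuous_on {tau_inv t0 m tau T0..} x' \<and>
        (\<forall>t \<ge> tau_inv t0 m tau T0.
           (x has_real_derivative x' t) (at t within {tau_inv t0 m tau T0..}) \<and>
           x' t + (\<Sum>i=1..m. p i t * x (tau i t)) = 0))"

definition oscillatory :: "(real \<Rightarrow> real) \<Rightarrow> bool" where
  "oscillatory x \<longleftrightarrow> (\<forall>T. \<exists>t \<ge> T. x t = 0)"

end

theory Submission
  imports Defs
begin

text \<open>
  Suppose a solution x of (E) is not oscillatory.  Being continuous and
  eventually zero-free, it has eventually constant sign; as -x is again a solution we
  may assume x > 0 eventually.  In integral form, (E) says that x(a) - x(b) is the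
  integral over [a,b] of sum_i p_i(s) x(tau_i(s)), so x is eventually non-increasing.
  For large t and s in [tau_j(t), t] the monotonicity of the delays gives
  x(tau_i(s)) >= x(tau_i(t)); with S(t) = sum_i x(tau_i(t)) this yields
  S(t) * (integral of q over [tau_j(t), t]) < x(tau_j(t)), where q <= p_i is the common
  lower bound of the coefficients (p in the informal statement), and summing over j shows
  that the m delay integrals sum to less than 1.  By the AM-GM inequality their
  product is then < 1/m^m for all large t, contradicting the limsup hypothesis.
\<close>

lemma prod_less_inverse_power_if_sum_less_1:
  fixes a :: "nat \<Rightarrow> real" and m :: nat
  assumes m: "m \<ge> 1" and nonneg: "\<And>j. j \<in> {1..m} \<Longrightarrow> a j \<ge> 0"
    and sum_less: "(\<Sum>j=1..m. a j) < 1"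
  shows "(\<Prod>j=1..m. a j) < 1 / real m ^ m"
proof -
  have "real m ^ m * (\<Prod>j=1..m. a j) = (\<Prod>j=1..m. real m * a j)"
    by (simp add: prod.distrib)
  also have "\<dots> \<le> (\<Prod>j=1..m. exp (real m * a j - 1))"
    using nonneg exp_ge_add_one_self[of "real m * a j - 1" for j] by (intro prod_mono) auto
  also have "\<dots> = exp (\<Sum>j=1..m. real m * a j - 1)"
    by (simp add: exp_sum)
  also have "\<dots> = exp (real m * (\<Sum>j=1..m. a j) - real m)"
    by (simp add: sum_subtractf sum_distrib_left)
  also have "\<dots> < 1"
    using m sum_less by simp
  finally show ?thesis
    using m by (simp add: field_simps)
qed

lemma constant_sign_on_halfline:
  fixes x :: "real \<Rightarrow> real"
  assumes cont: "continuous_on {T..} x" and nonzero: "\<And>t. t \<ge> T \<Longrightarrow> x t \<noteq> 0"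
  shows "(\<forall>t\<ge>T. x t > 0) \<or> (\<forall>t\<ge>T. x t < 0)"
proof (rule ccontr)
  assume "\<not> ?thesis"
  then obtain a b where ab: "a \<ge> T" "b \<ge> T" "x a \<le> 0" "x b \<ge> 0"
    by force
  have "continuous_on {min a b..max a b} x"
    using ab by (intro continuous_on_subset[OF cont]) auto
  then obtain s where "min a b \<le> s" "s \<le> max a b" "x s = 0"
    using IVT'[of x a 0 b] IVT2'[of x a 0 b] ab by (cases "a \<le> b") auto
  then show False
    using nonzero ab by auto
qed

lemma solution_integral_form:
  assumes sol: "is_solution t0 m p tau x T0"
    and a: "tau_inv t0 m tau T0 \<le> a" and ab: "a \<le> b"
  shows "((\<lambda>s. \<Sum>i=1..m. p i s * x (tau i s)) has_integral (x a - x b)) {a..b}"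
proof -
  obtain x' where
    deriv: "\<And>t. t \<ge> tau_inv t0 m tau T0 \<Longrightarrow>
              (x has_real_derivative x' t) (at t within {tau_inv t0 m tau T0..})"
    and eq: "\<And>t. t \<ge> tau_inv t0 m tau T0 \<Longrightarrow> x' t + (\<Sum>i=1..m. p i t * x (tau i t)) = 0"
    using sol unfolding is_solution_def by blast
  have "(x' has_integral (x b - x a)) {a..b}"
  proof (rule fundamental_theorem_of_calculus[OF ab])
    fix s assume "s \<in> {a..b}"
    then have "(x has_real_derivative x' s) (at s within {a..b})"
      using deriv[of s] a by (auto intro: DERIV_subset)
    then show "(x has_vector_derivative x' s) (at s within {a..b})"
      by (simp add: has_real_derivative_iff_has_vector_derivative)
  qed
  then have "((\<lambda>s. - x' s) has_integral (x a - x b)) {a..b}"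
    by (metis has_integral_neg minus_diff_eq)
  then show ?thesis
  proof (rule has_integral_eq[rotated])
    fix s assume "s \<in> {a..b}"
    then show "- x' s = (\<Sum>i=1..m. p i s * x (tau i s))"
      using eq[of s] a by (simp add: eq_neg_iff_add_eq_0)
  qed
qed

lemma is_solution_uminus:
  assumes "is_solution t0 m p tau x T0"
  shows "is_solution t0 m p tau (\<lambda>t. - x t) T0"
proof -
  from assms obtain x' where h: "T0 \<ge> t0" "continuous_on {T0..} x"
    "continuous_on {tau_inv t0 m tau T0..} x'"
    "\<And>t. t \<ge> tau_inv t0 m tau T0 \<Longrightarrow>
       (x has_real_derivative x' t) (at t within {tau_inv t0 m tau T0..}) \<and>
       x' t + (\<Sum>i=1..m. p i t * x (tau i t)) = 0"
    unfolding is_solution_def by blast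
  show ?thesis unfolding is_solution_def
  proof (intro conjI exI[of _ "\<lambda>t. - x' t"] allI impI)
    show "T0 \<ge> t0" by fact
    show "continuous_on {T0..} (\<lambda>t. - x t)" using h(2) by (intro continuous_intros)
    show "continuous_on {tau_inv t0 m tau T0..} (\<lambda>t. - x' t)" using h(3) by (intro continuous_intros)
    fix t assume t: "t \<ge> tau_inv t0 m tau T0"
    show "((\<lambda>t. - x t) has_real_derivative - x' t) (at t within {tau_inv t0 m tau T0..})"
      using h(4)[OF t] by (intro DERIV_minus) auto
    show "- x' t + (\<Sum>i=1..m. p i t * - x (tau i t)) = 0"
      using h(4)[OF t] by (simp add: sum_negf)
  qed
qed

lemma delays_eventually_above:
  fixes tau :: "nat \<Rightarrow> real \<Rightarrow> real"
  assumes "\<And>i. i \<in> {1..m} \<Longrightarrow> filterlim (tau i) at_top at_top"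
  obtains B where "B \<ge> A" "\<And>t i. t \<ge> B \<Longrightarrow> i \<in> {1..m} \<Longrightarrow> tau i t \<ge> C"
proof -
  have "\<forall>\<^sub>F t in at_top. \<forall>i\<in>{1..m}. tau i t \<ge> C"
    using assms unfolding filterlim_at_top by (intro eventually_ball_finite) auto
  then obtain B where "\<forall>t\<ge>B. \<forall>i\<in>{1..m}. tau i t \<ge> C"
    by (auto simp: eventually_at_top_linorder)
  then show ?thesis
    by (intro that[of "max A B"]) auto
qed

lemma solution_antitone:
  assumes sol: "is_solution t0 m p tau x T0"
    and T: "tau_inv t0 m tau T0 \<le> T" "t0 \<le> T"
    and p_nonneg: "\<And>i t. i \<in> {1..m} \<Longrightarrow> t \<ge> t0 \<Longrightarrow> p i t \<ge> 0"
    and delayed_nonneg: "\<And>i s. i \<in> {1..m} \<Longrightarrow> s \<ge> T \<Longrightarrow> x (tau i s) \<ge> 0"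
  shows "antimono_on {T..} x"
proof (rule monotone_onI)
  fix a b assume ab: "a \<in> {T..}" "b \<in> {T..}" "a \<le> b"
  then have "((\<lambda>s. \<Sum>i=1..m. p i s * x (tau i s)) has_integral (x a - x b)) {a..b}"
    using solution_integral_form[OF sol] T by simp
  then have "0 \<le> x a - x b"
  proof (rule has_integral_nonneg)
    fix s assume "s \<in> {a..b}"
    then have "s \<ge> T" using ab by simp
    then show "0 \<le> (\<Sum>i=1..m. p i s * x (tau i s))"
      using p_nonneg delayed_nonneg T by (intro sum_nonneg mult_nonneg_nonneg) auto
  qed
  then show "x b \<le> x a" by simp
qed

text \<open>Let x be a solution which is positive on [T,oo) and
  non-increasing on [T',oo), where the delays map [T,oo) into [T',oo).  If t >= T and all
  delayed arguments tau_i(t) lie in [T,oo), then the integrals of q over the delay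
  intervals [tau_j(t), t] sum to less than 1.  The key pointwise bound on [tau_j(t), t] is
  q(s) * S <= sum_i p_i(s) x(tau_i(s)) with S = sum_i x(tau_i(t)), by monotonicity of the
  delays and of x.\<close>

lemma sum_delay_integrals_less_1:
  assumes m: "m \<ge> 1"
    and sol: "is_solution t0 m p tau x T0"
    and T: "tau_inv t0 m tau T0 \<le> T" "t0 \<le> T"
    and pos: "\<And>s. s \<ge> T \<Longrightarrow> x s > 0"
    and antitone: "antimono_on {T'..} x"
    and p_ge_q: "\<And>i s. i \<in> {1..m} \<Longrightarrow> s \<ge> t0 \<Longrightarrow> p i s \<ge> q s"
    and q_cont: "continuous_on {t0..} q"
    and q_nonneg: "\<And>s. s \<ge> t0 \<Longrightarrow> q s \<ge> 0"
    and tau_le: "\<And>i s. i \<in> {1..m} \<Longrightarrow> s \<ge> t0 \<Longrightarrow> tau i s \<le> s"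
    and tau_mono: "\<And>i. i \<in> {1..m} \<Longrightarrow> mono_on {t0..} (tau i)"
    and t: "t \<ge> T" and far: "\<And>i. i \<in> {1..m} \<Longrightarrow> tau i t \<ge> T"
    and delayed_far: "\<And>i s. i \<in> {1..m} \<Longrightarrow> s \<ge> T \<Longrightarrow> tau i s \<ge> T'"
  shows "(\<Sum>j=1..m. integral {tau j t..t} q) < 1"
proof -
  define S where "S = (\<Sum>i=1..m. x (tau i t))"
  have S_pos: "S > 0"
    unfolding S_def using m pos far by (intro sum_pos) auto
  have bound: "integral {tau j t..t} q * S < x (tau j t)" if j: "j \<in> {1..m}" for j
  proof -
    define a where "a = tau j t"
    have a: "T \<le> a" "a \<le> t"
      using far[OF j] tau_le[OF j] t T unfolding a_def by auto
    have q_int: "q integrable_on {a..t}"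
      using a T by (intro integrable_continuous_interval continuous_on_subset[OF q_cont]) auto
    have "integral {a..t} q * S \<le> x a - x t"
    proof (rule has_integral_le)
      show "((\<lambda>s. q s * S) has_integral integral {a..t} q * S) {a..t}"
        using q_int by (intro has_integral_mult_left integrable_integral)
      show "((\<lambda>s. \<Sum>i=1..m. p i s * x (tau i s)) has_integral (x a - x t)) {a..t}"
        using solution_integral_form[OF sol] a T by auto
    next
      fix s assume s: "s \<in> {a..t}"
      then have s_ge: "s \<ge> T" "s \<ge> t0" using a T by auto
      have "q s * S = (\<Sum>i=1..m. q s * x (tau i t))"
        unfolding S_def by (simp add: sum_distrib_left)
      also have "\<dots> \<le> (\<Sum>i=1..m. p i s * x (tau i s))"
      proof (rule sum_mono)
        fix i assume i: "i \<in> {1..m}"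
        have "tau i s \<le> tau i t"
          using mono_onD[OF tau_mono[OF i]] s s_ge T t by auto
        then have "x (tau i t) \<le> x (tau i s)"
          using monotone_onD[OF antitone] delayed_far[OF i] s_ge t by auto
        moreover have "0 \<le> q s" "q s \<le> p i s" "0 < x (tau i t)"
          using q_nonneg p_ge_q[OF i] pos far[OF i] s_ge by auto
        ultimately show "q s * x (tau i t) \<le> p i s * x (tau i s)"
          by (intro mult_mono) auto
      qed
      finally show "q s * S \<le> (\<Sum>i=1..m. p i s * x (tau i s))" .
    qed
    then show ?thesis
      using pos[OF t] unfolding a_def by simp
  qed
  have "(\<Sum>j=1..m. integral {tau j t..t} q * S) < S"
    using m bound unfolding S_def by (intro sum_strict_mono) auto
  then have "(\<Sum>j=1..m. integral {tau j t..t} q) * S < 1 * S"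
    by (simp add: sum_distrib_right)
  then show ?thesis
    using S_pos by simp
qed

lemma eventually_positive_solution_product_bound:
  assumes m: "m \<ge> 1"
    and sol: "is_solution t0 m p tau x T0"
    and pos: "\<And>t. t \<ge> T \<Longrightarrow> x t > 0"
    and p_nonneg: "\<And>i t. i \<in> {1..m} \<Longrightarrow> t \<ge> t0 \<Longrightarrow> p i t \<ge> 0"
    and p_ge_q: "\<And>i t. i \<in> {1..m} \<Longrightarrow> t \<ge> t0 \<Longrightarrow> p i t \<ge> q t"
    and q_cont: "continuous_on {t0..} q"
    and q_nonneg: "\<And>t. t \<ge> t0 \<Longrightarrow> q t \<ge> 0"
    and tau_le: "\<And>i t. i \<in> {1..m} \<Longrightarrow> t \<ge> t0 \<Longrightarrow> tau i t \<le> t"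
    and tau_lim: "\<And>i. i \<in> {1..m} \<Longrightarrow> filterlim (tau i) at_top at_top"
    and tau_mono: "\<And>i. i \<in> {1..m} \<Longrightarrow> mono_on {t0..} (tau i)"
  shows "\<forall>\<^sub>F t in at_top. (\<Prod>j=1..m. integral {tau j t..t} q) < 1 / real m ^ m"
proof -
  define T1 where "T1 = max T (max (tau_inv t0 m tau T0) t0)"
  obtain T2 where T2: "T2 \<ge> T1" "\<And>t i. t \<ge> T2 \<Longrightarrow> i \<in> {1..m} \<Longrightarrow> tau i t \<ge> T1"
    using delays_eventually_above[where m=m and tau=tau and A=T1 and C=T1, OF tau_lim] by blast
  obtain T3 where T3: "T3 \<ge> T2" "\<And>t i. t \<ge> T3 \<Longrightarrow> i \<in> {1..m} \<Longrightarrow> tau i t \<ge> T2"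
    using delays_eventually_above[where m=m and tau=tau and A=T2 and C=T2, OF tau_lim] by blast
  obtain T4 where T4: "T4 \<ge> T3" "\<And>t i. t \<ge> T4 \<Longrightarrow> i \<in> {1..m} \<Longrightarrow> tau i t \<ge> T3"
    using delays_eventually_above[where m=m and tau=tau and A=T3 and C=T3, OF tau_lim] by blast
  have T1: "T \<le> T1" "tau_inv t0 m tau T0 \<le> T1" "t0 \<le> T1"
    by (simp_all add: T1_def)
  have delayed_pos: "x (tau i s) > 0" if "i \<in> {1..m}" "s \<ge> T2" for i s
    using pos T1(1) T2(2)[OF that(2,1)] by simp
  have antitone: "antimono_on {T2..} x"
    using T1 T2(1) less_imp_le[OF delayed_pos] by (intro solution_antitone[OF sol _ _ p_nonneg]) auto
  have sum_less_1: "(\<Sum>j=1..m. integral {tau j t..t} q) < 1" if t: "t \<ge> T4" for t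
  proof (rule sum_delay_integrals_less_1[where T=T3 and T'=T2, OF m sol _ _ _ antitone p_ge_q
        q_cont q_nonneg tau_le tau_mono])
    show "tau_inv t0 m tau T0 \<le> T3" "t0 \<le> T3" "T3 \<le> t"
      using T1 T2(1) T3(1) T4(1) t by simp_all
    show "x s > 0" if "s \<ge> T3" for s
      using pos T1(1) T2(1) T3(1) that by simp
    show "tau i t \<ge> T3" if "i \<in> {1..m}" for i
      using T4(2)[OF t that] .
    show "tau i s \<ge> T2" if "i \<in> {1..m}" "s \<ge> T3" for i s
      using T3(2)[OF that(2,1)] .
  qed
  have delay_integral_nonneg: "integral {tau j t..t} q \<ge> 0" if j: "j \<in> {1..m}" and t: "t \<ge> T4" for j t
  proof -
    have "t0 \<le> tau j t"
      using T1 T2(1) T3(1) T4(2)[OF t j] by simp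
    then show ?thesis
      using q_nonneg by (intro integral_nonneg integrable_continuous_interval
          continuous_on_subset[OF q_cont]) auto
  qed
  have "(\<Prod>j=1..m. integral {tau j t..t} q) < 1 / real m ^ m" if "t \<ge> T4" for t
    by (rule prod_less_inverse_power_if_sum_less_1[OF m delay_integral_nonneg[OF _ that]
          sum_less_1[OF that]])
  then show ?thesis
    unfolding eventually_at_top_linorder by (intro exI[of _ T4]) simp
qed

theorem corollary3p4:
  fixes t0 :: real and m :: nat
    and p :: "nat \<Rightarrow> real \<Rightarrow> real" and tau :: "nat \<Rightarrow> real \<Rightarrow> real"
    and q :: "real \<Rightarrow> real"
  assumes m_pos: "m \<ge> 1"
    and p_cont: "\<And>i. i \<in> {1..m} \<Longrightarrow> continuous_on {t0..} (p i)"
    and p_nonneg: "\<And>i t. i \<in> {1..m} \<Longrightarrow> t \<ge> t0 \<Longrightarrow> p i t \<ge> 0"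
    and tau_cont: "\<And>i. i \<in> {1..m} \<Longrightarrow> continuous_on {t0..} (tau i)"
    and tau_nonneg: "\<And>i t. i \<in> {1..m} \<Longrightarrow> t \<ge> t0 \<Longrightarrow> tau i t \<ge> 0"
    and tau_le: "\<And>i t. i \<in> {1..m} \<Longrightarrow> t \<ge> t0 \<Longrightarrow> tau i t \<le> t"
    and tau_lim: "\<And>i. i \<in> {1..m} \<Longrightarrow> filterlim (tau i) at_top at_top"
    and tau_mono: "\<And>i. i \<in> {1..m} \<Longrightarrow> mono_on {t0..} (tau i)"
    and q_cont: "continuous_on {t0..} q"
    and q_nonneg: "\<And>t. t \<ge> t0 \<Longrightarrow> q t \<ge> 0"
    and q_le: "\<And>i t. i \<in> {1..m} \<Longrightarrow> t \<ge> t0 \<Longrightarrow> p i t \<ge> q t"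
    and cond: "Limsup at_top (\<lambda>t. ereal (\<Prod>j=1..m. integral {tau j t..t} q))
                 > ereal (1 / real m ^ m)"
  shows "\<forall>x T0. is_solution t0 m p tau x T0 \<longrightarrow> oscillatory x"
proof (intro allI impI)
  fix x T0 assume sol: "is_solution t0 m p tau x T0"
  note product_bound = eventually_positive_solution_product_bound[OF m_pos _ _
      p_nonneg q_le q_cont q_nonneg tau_le tau_lim tau_mono]
  show "oscillatory x"
  proof (rule ccontr)
    assume "\<not> oscillatory x"
    then obtain T where nonzero: "\<And>t. t \<ge> max T T0 \<Longrightarrow> x t \<noteq> 0"
      unfolding oscillatory_def by auto
    have "continuous_on {max T T0..} x"
      using sol unfolding is_solution_def by (auto intro: continuous_on_subset)
    then have "(\<forall>t\<ge>max T T0. x t > 0) \<or> (\<forall>t\<ge>max T T0. x t < 0)"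
      using nonzero by (rule constant_sign_on_halfline)
    then have "\<forall>\<^sub>F t in at_top. (\<Prod>j=1..m. integral {tau j t..t} q) < 1 / real m ^ m"
    proof
      assume "\<forall>t\<ge>max T T0. x t > 0"
      then show ?thesis
        by (intro product_bound[OF sol, of "max T T0"]) simp
    next
      assume "\<forall>t\<ge>max T T0. x t < 0"
      then show ?thesis
        by (intro product_bound[OF is_solution_uminus[OF sol], of "max T T0"]) simp
    qed
    then have "Limsup at_top (\<lambda>t. ereal (\<Prod>j=1..m. integral {tau j t..t} q))
                 \<le> ereal (1 / real m ^ m)"
      by (intro Limsup_bounded) (auto elim: eventually_mono)
    then show False
      using cond by simp
  qed
qed

end
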